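(* Let $\mu_1,\mu_2,\mu_3$ be three mass distributions in $\mathbb{R}^2$ and let $\ell$ be any line in the plane. Then there exist two lines $\ell_1,\ell_2$ (where a line at infinity is allowed) such that $\{\ell_1,\ell_2\}$ simultaneously bisects $\mu_1,\mu_2,\mu_3$ and $\ell_1$ is parallel to $\ell$.
   Context: A mass distribution $\mu$ on $\mathbb{R}^2$ is a measure such that all open subsets are measurable, $0<\mu(\mathbb{R}^2)<\infty$, and $\mu(S)=0$ for every lower-dimensional subset $S$. For a finite set $\mathcal{L}$ of oriented lines, each $\ell'\in\mathcal{L}$ has positive side $\ell'^+=\{x: g(x)\ge 0\}$ for a defining affine function $g(x)=a_1x_1+a_2x_2+a_0$; lines at infinity ($g\equiv a_0\neq 0$ constant) are allowed, with $\ell'^+=\mathbb{R}^2$, $\ell'^-=\emptyset$. Let $\lambda(p)$ be the number of lines of $\mathcal{L}$ having $p$ on their positive side, $R^+=\{p:\lambda(p)\text{ even}\}$, $R^-=\{p:\lambda(p)\text{ odd}\}$. $\mathcal{L}$ simultaneously bisects $\mu_1,\dots,\mu_k$ if $\mu_i(R^+)=\mu_i(R^-)$ for all $i$; an unoriented set of lines bisects if some orientation does. A line at infinity is considered parallel to every line. *)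

theory Defs
  imports "HOL-Analysis.Analysis"
begin

definition mass_distribution :: "(real^2) measure \<Rightarrow> bool" where
  "mass_distribution M \<longleftrightarrow>
     space M = UNIV \<and>
     (\<forall>U. open U \<longrightarrow> U \<in> sets M) \<and>
     0 < emeasure M UNIV \<and> emeasure M UNIV < \<infinity> \<and>
     (\<forall>S \<in> sets M. aff_dim S < 2 \<longrightarrow> emeasure M S = 0)"

text \<open>An oriented (generalised) line is given by its defining affine function
  g(x) = a \<bullet> x + c, encoded as the pair (a, c), with (a, c) \<noteq> (0, 0).
  If a = 0 (and c \<noteq> 0) it is a line at infinity.\<close>

type_synonym oline = "(real^2) \<times> real"

definition is_oline :: "oline \<Rightarrow> bool" where
  "is_oline L \<longleftrightarrow> fst L \<noteq> 0 \<or> snd L \<noteq> 0"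

definition is_proper_line :: "oline \<Rightarrow> bool" where
  "is_proper_line L \<longleftrightarrow> fst L \<noteq> 0"

definition pos_side :: "oline \<Rightarrow> (real^2) set" where
  "pos_side L = {x. fst L \<bullet> x + snd L \<ge> 0}"

definition parallel :: "oline \<Rightarrow> oline \<Rightarrow> bool" where
  "parallel L L' \<longleftrightarrow> fst L = 0 \<or> fst L' = 0 \<or> (\<exists>t. fst L = t *\<^sub>R fst L')"

definition lam :: "oline list \<Rightarrow> real^2 \<Rightarrow> nat" where
  "lam Ls p = length (filter (\<lambda>L. p \<in> pos_side L) Ls)"

definition R_plus :: "oline list \<Rightarrow> (real^2) set" where
  "R_plus Ls = {p. even (lam Ls p)}"

definition R_minus :: "oline list \<Rightarrow> (real^2) set" where
  "R_minus Ls = {p. odd (lam Ls p)}"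

definition bisects :: "oline list \<Rightarrow> (real^2) measure \<Rightarrow> bool" where
  "bisects Ls M \<longleftrightarrow> emeasure M (R_plus Ls) = emeasure M (R_minus Ls)"

end

theory Submission
  imports Defs "HOL-Homology.Homology"
begin

text \<open>For a measure \<open>\<mu>\<close>, the defect \<open>\<mu>(R\<^sup>+) - \<mu>(R\<^sup>-)\<close> of a pair of lines depends continuously
  on the lines, and changes sign when one of them is reversed. Let the first line run through the
  lines parallel to \<open>l\<close>, from the line at infinity with the whole plane on its positive side
  (t = 0) to the same line reversed (t = 1), and let the second line be given by its coefficient
  vector in the unit sphere \<open>S\<^sup>2\<close>. The three defects form a map \<open>F : [0,1] \<times> S\<^sup>2 \<rightarrow> \<real>\<^sup>3\<close>, odd
  in the second variable, with \<open>F(1, -) = - F(0, -)\<close>. If \<open>F\<close> had no zero, \<open>F(0, -)/|F(0, -)|\<close> would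
  be an odd self-map of \<open>S\<^sup>2\<close> homotopic to its composite with the antipodal map, which has
  degree -1; so its degree would vanish, whereas odd maps have odd degree (Borsuk). The latter follows
  from Borsuk's mod 2 comparison of the degrees of an odd map on the sphere and on its equator,
  after deforming the odd map into one that is the identity on the equator.\<close>

lemma homotopic_with_canonI:
  fixes h :: "real \<times> 'a::real_normed_vector \<Rightarrow> 'b::real_normed_vector"
  assumes "continuous_on ({0..1} \<times> X) h" "h \<in> {0..1} \<times> X \<rightarrow> Y"
    and "\<And>x. x \<in> X \<Longrightarrow> h (0, x) = f x" "\<And>x. x \<in> X \<Longrightarrow> h (1, x) = g x"
  shows "homotopic_with_canon (\<lambda>_. True) X Y f g"
proof -
  have "prod_topology (top_of_set {0..1}) (top_of_set X) = top_of_set ({0..1::real} \<times> X)"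
    by (metis prod_topology_euclidean subtopology_Times)
  then show ?thesis
    using assms by (auto simp: homotopic_with continuous_map_subtopology_eu)
qed

definition reflection_along :: "'a::real_inner \<Rightarrow> 'a \<Rightarrow> 'a" where
  "reflection_along v x = x - (2 * (v \<bullet> x) / (v \<bullet> v)) *\<^sub>R v"

lemma norm_reflection_along [simp]: "norm (reflection_along v x) = norm x"
proof (cases "v = 0")
  case False
  have "reflection_along v x \<bullet> reflection_along v x
      = x \<bullet> x - 4 * (v \<bullet> x) * (v \<bullet> x) / (v \<bullet> v) + 4 * (v \<bullet> x) * (v \<bullet> x) * (v \<bullet> v) / ((v \<bullet> v) * (v \<bullet> v))"
    unfolding reflection_along_def
    by (simp add: inner_diff_left inner_diff_right algebra_simps power2_eq_square inner_commute)
  also have "\<dots> = x \<bullet> x"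
    using False by (simp add: field_simps)
  finally show ?thesis
    by (simp add: norm_eq_sqrt_inner)
qed (simp add: reflection_along_def)

lemma reflection_along_uminus: "reflection_along v (- x) = - reflection_along v x"
  by (simp add: reflection_along_def algebra_simps)

lemma continuous_on_reflection_along: "continuous_on S (reflection_along v)"
  unfolding reflection_along_def divide_inverse by (intro continuous_intros)

lemma reflection_along_diff:
  assumes "norm w = norm u"
  shows "reflection_along (w - u) w = u"
proof (cases "w = u")
  case False
  have "w \<bullet> w = u \<bullet> u"
    using assms by (simp add: norm_eq_sqrt_inner)
  then have "2 * ((w - u) \<bullet> w) = (w - u) \<bullet> (w - u)"
    by (simp add: inner_diff_left inner_diff_right inner_commute)
  moreover have "(w - u) \<bullet> (w - u) \<noteq> 0"
    using False by simp
  ultimately have "2 * ((w - u) \<bullet> w) / ((w - u) \<bullet> (w - u)) = 1"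
    by (metis divide_self)
  then show ?thesis
    by (simp only: reflection_along_def scaleR_one) simp
qed (simp add: reflection_along_def)

section \<open>Degree of self-maps of the 2-sphere\<close>

type_synonym R3 = "real \<times> real \<times> real"

abbreviation S2 :: "R3 set" where "S2 \<equiv> sphere 0 1"

abbreviation xcoord :: "R3 \<Rightarrow> real" where "xcoord v \<equiv> fst v"
abbreviation ycoord :: "R3 \<Rightarrow> real" where "ycoord v \<equiv> fst (snd v)"
abbreviation zcoord :: "R3 \<Rightarrow> real" where "zcoord v \<equiv> snd (snd v)"

lemma norm_R3: "norm (v::R3) = sqrt ((xcoord v)\<^sup>2 + (ycoord v)\<^sup>2 + (zcoord v)\<^sup>2)"
  by (cases v) (auto simp: norm_Pair)

lemma norm_eq_1_R3: "norm (v::R3) = 1 \<longleftrightarrow> (xcoord v)\<^sup>2 + (ycoord v)\<^sup>2 + (zcoord v)\<^sup>2 = 1"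
  by (simp add: norm_R3)

definition of_nsphere :: "(nat \<Rightarrow> real) \<Rightarrow> R3" where
  "of_nsphere x = (x 0, x 1, x 2)"

definition to_nsphere :: "R3 \<Rightarrow> nat \<Rightarrow> real" where
  "to_nsphere v = (\<lambda>i. if i = 0 then xcoord v else if i = 1 then ycoord v else if i = 2 then zcoord v else 0)"

definition sphere_degree :: "(R3 \<Rightarrow> R3) \<Rightarrow> int" where
  "sphere_degree g = Brouwer_degree2 2 (to_nsphere \<circ> g \<circ> of_nsphere)"

lemma topspace_nsphere_2:
  "x \<in> topspace (nsphere 2) \<longleftrightarrow> (\<forall>i\<ge>3. x i = 0) \<and> (x 0)\<^sup>2 + (x 1)\<^sup>2 + (x 2)\<^sup>2 = 1"
  by (simp add: nsphere_def topspace_Euclidean_space numeral_3_eq_3 numeral_2_eq_2 add.assoc)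

lemma continuous_map_of_nsphere: "continuous_map (nsphere 2) (top_of_set S2) of_nsphere"
proof -
  have "continuous_map (nsphere 2) euclidean of_nsphere"
    unfolding of_nsphere_def
    by (simp flip: prod_topology_euclidean add: continuous_map_paired continuous_map_nsphere_projection)
  moreover have "of_nsphere x \<in> S2" if "x \<in> topspace (nsphere 2)" for x
    using that by (simp add: topspace_nsphere_2 norm_eq_1_R3 of_nsphere_def)
  ultimately show ?thesis
    by (simp add: continuous_map_in_subtopology image_subset_iff)
qed

lemma continuous_map_to_nsphere: "continuous_map (top_of_set S2) (nsphere 2) to_nsphere"
proof -
  have "continuous_map (top_of_set S2) euclideanreal (\<lambda>v. to_nsphere v i)" for i
    unfolding to_nsphere_def by (cases "i = 0"; cases "i = 1"; cases "i = 2") (auto intro!: continuous_intros)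
  then have "continuous_map (top_of_set S2) (powertop_real UNIV) to_nsphere"
    by (simp add: continuous_map_componentwise_UNIV)
  moreover have "to_nsphere v \<in> topspace (nsphere 2)" if "v \<in> S2" for v
    using that by (simp add: topspace_nsphere_2 norm_eq_1_R3 to_nsphere_def)
  ultimately show ?thesis
    by (simp add: nsphere continuous_map_in_subtopology image_subset_iff)
qed

lemma of_to_nsphere [simp]: "of_nsphere (to_nsphere v) = v"
  by (simp add: of_nsphere_def to_nsphere_def)

lemma of_nsphere_uminus: "of_nsphere (\<lambda>i. - x i) = - of_nsphere x"
  by (simp add: of_nsphere_def)

lemma to_nsphere_uminus: "to_nsphere (- v) = (\<lambda>i. - to_nsphere v i)"
  by (auto simp: to_nsphere_def fun_eq_iff)

lemma to_of_nsphere: "x \<in> topspace (nsphere 2) \<Longrightarrow> to_nsphere (of_nsphere x) = x"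
  by (auto simp: of_nsphere_def to_nsphere_def topspace_nsphere_2 fun_eq_iff)

lemma of_nsphere_in_S2: "x \<in> topspace (nsphere 2) \<Longrightarrow> of_nsphere x \<in> S2"
  using continuous_map_of_nsphere continuous_map_image_subset_topspace by fastforce

lemma continuous_map_nsphere_transport:
  assumes "continuous_on S2 g" "g \<in> S2 \<rightarrow> S2"
  shows "continuous_map (nsphere 2) (nsphere 2) (to_nsphere \<circ> g \<circ> of_nsphere)"
proof -
  have "continuous_map (top_of_set S2) (top_of_set S2) g"
    using assms by (simp add: continuous_map_subtopology_eu)
  then show ?thesis
    using continuous_map_compose[OF continuous_map_compose[OF continuous_map_of_nsphere] continuous_map_to_nsphere]
    by (simp add: o_assoc)
qed

lemma sphere_degree_homotopic:
  assumes "homotopic_with_canon (\<lambda>_. True) S2 S2 f g"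
  shows "sphere_degree f = sphere_degree g"
proof -
  have "homotopic_with (\<lambda>_. True) (top_of_set S2) (nsphere 2) (to_nsphere \<circ> f) (to_nsphere \<circ> g)"
    by (rule homotopic_with_compose_continuous_map_left[OF assms continuous_map_to_nsphere]) auto
  then have "homotopic_with (\<lambda>_. True) (nsphere 2) (nsphere 2)
      (to_nsphere \<circ> f \<circ> of_nsphere) (to_nsphere \<circ> g \<circ> of_nsphere)"
    by (rule homotopic_with_compose_continuous_map_right[OF _ continuous_map_of_nsphere]) auto
  then show ?thesis
    unfolding sphere_degree_def by (rule Brouwer_degree2_homotopic)
qed

lemma sphere_degree_compose:
  assumes "continuous_on S2 f" "f \<in> S2 \<rightarrow> S2" "continuous_on S2 g" "g \<in> S2 \<rightarrow> S2"
  shows "sphere_degree (f \<circ> g) = sphere_degree f * sphere_degree g"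
proof -
  have "sphere_degree (f \<circ> g)
      = Brouwer_degree2 2 ((to_nsphere \<circ> f \<circ> of_nsphere) \<circ> (to_nsphere \<circ> g \<circ> of_nsphere))"
    unfolding sphere_degree_def by (rule Brouwer_degree2_eq) (simp add: to_of_nsphere)
  also have "\<dots> = sphere_degree f * sphere_degree g"
    unfolding sphere_degree_def
    by (rule Brouwer_degree2_compose) (use continuous_map_nsphere_transport assms in auto)
  finally show ?thesis .
qed

lemma sphere_degree_uminus: "sphere_degree uminus = -1"
proof -
  define r :: "R3 \<Rightarrow> R3" where "r = (\<lambda>(a, b, c). (-a, b, c))"
  define rotate :: "real \<times> R3 \<Rightarrow> R3" where
    "rotate = (\<lambda>(t, a, b, c). (-a, cos (pi * t) * b - sin (pi * t) * c, sin (pi * t) * b + cos (pi * t) * c))"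
  have "(x * b - y * c)\<^sup>2 + (y * b + x * c)\<^sup>2 = (x\<^sup>2 + y\<^sup>2) * (b\<^sup>2 + c\<^sup>2)" for x y b c :: real
    by (simp add: power2_eq_square algebra_simps)
  then have rotation_norm: "(cos t * b - sin t * c)\<^sup>2 + (sin t * b + cos t * c)\<^sup>2 = b\<^sup>2 + c\<^sup>2"
    for t b c :: real
    by simp
  have "homotopic_with_canon (\<lambda>_. True) S2 S2 r uminus"
  proof (rule homotopic_with_canonI[where h = rotate])
    show "continuous_on ({0..1} \<times> S2) rotate"
      unfolding rotate_def case_prod_beta by (intro continuous_intros)
    show "rotate \<in> {0..1} \<times> S2 \<rightarrow> S2"
      by (auto simp: rotate_def norm_eq_1_R3 add.assoc rotation_norm)
  qed (auto simp: rotate_def r_def)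
  moreover have "sphere_degree r = -1"
  proof -
    have "sphere_degree r = Brouwer_degree2 2 (\<lambda>x i. if i = 0 then -x i else x i)"
      unfolding sphere_degree_def
      by (rule Brouwer_degree2_eq) (auto simp: r_def to_nsphere_def of_nsphere_def topspace_nsphere_2 fun_eq_iff)
    then show ?thesis by (simp add: Brouwer_degree2_reflection)
  qed
  ultimately show ?thesis by (simp add: sphere_degree_homotopic)
qed

section \<open>Odd self-maps of the 2-sphere have odd degree\<close>

lemma odd_sphere_degree_if_fixes_equator:
  assumes cont: "continuous_on S2 g" and into: "g \<in> S2 \<rightarrow> S2"
    and odd_map: "\<And>x. x \<in> S2 \<Longrightarrow> g (- x) = - g x"
    and equator: "\<And>x. x \<in> S2 \<Longrightarrow> zcoord x = 0 \<Longrightarrow> g x = x"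
  shows "odd (sphere_degree g)"
proof -
  let ?f = "to_nsphere \<circ> g \<circ> of_nsphere"
  have f_cont: "continuous_map (nsphere 2) (nsphere 2) ?f"
    using cont into by (rule continuous_map_nsphere_transport)
  have f_odd: "(?f \<circ> (\<lambda>x i. - x i)) u = ((\<lambda>x i. - x i) \<circ> ?f) u" if "u \<in> topspace (nsphere 2)" for u
    using odd_map[OF of_nsphere_in_S2[OF that]] by (simp add: of_nsphere_uminus to_nsphere_uminus)
  have f_equator: "?f u = u" if "u \<in> topspace (nsphere 1)" for u
  proof -
    have u: "u \<in> topspace (nsphere 2)" "u 2 = 0"
      using that by (auto simp: nsphere_def topspace_Euclidean_space numeral_2_eq_2 topspace_nsphere_2)
    have "g (of_nsphere u) = of_nsphere u"
      using equator[OF of_nsphere_in_S2[OF u(1)]] u(2) by (simp add: of_nsphere_def)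
    then show ?thesis
      using to_of_nsphere[OF u(1)] by simp
  qed
  have "even (Brouwer_degree2 2 ?f - Brouwer_degree2 (2 - Suc 0) ?f)"
    by (rule Borsuk_odd_mapping_degree_step[OF f_cont f_odd]) (use f_equator in auto)
  moreover have "Brouwer_degree2 1 ?f = 1"
    using Brouwer_degree2_eq[of 1 ?f id] f_equator by simp
  ultimately show ?thesis
    by (simp add: sphere_degree_def)
qed

definition planar_norm :: "R3 \<Rightarrow> real" where
  "planar_norm x = sqrt ((xcoord x)\<^sup>2 + (ycoord x)\<^sup>2)"

definition planar_angle :: "R3 \<Rightarrow> real" where
  "planar_angle x = arccos (xcoord x / planar_norm x) / pi"

definition equator_projection :: "R3 \<Rightarrow> R3" where
  "equator_projection x = (xcoord x / planar_norm x, ycoord x / planar_norm x, 0)"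

definition semicircle :: "real \<Rightarrow> R3" where
  "semicircle s = (cos (pi * s), sin (pi * s), 0)"

definition band :: "R3 set" where
  "band = {x \<in> S2. \<bar>zcoord x\<bar> \<le> 1/2}"

lemma planar_norm_uminus [simp]: "planar_norm (- x) = planar_norm x"
  by (simp add: planar_norm_def)

lemma equator_projection_uminus: "equator_projection (- x) = - equator_projection x"
  by (simp add: equator_projection_def)

lemma uminus_in_band_iff [simp]: "- x \<in> band \<longleftrightarrow> x \<in> band"
  by (auto simp: band_def)

lemma planar_norm_pos: "x \<in> band \<Longrightarrow> planar_norm x > 0"
proof -
  assume x: "x \<in> band"
  then have "(xcoord x)\<^sup>2 + (ycoord x)\<^sup>2 = 1 - (zcoord x)\<^sup>2"
    by (auto simp: band_def norm_eq_1_R3)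
  moreover have "(zcoord x)\<^sup>2 \<le> 1/4"
    using x abs_le_square_iff[of "zcoord x" "1/2"] by (auto simp: band_def power2_eq_square)
  ultimately show ?thesis
    by (simp add: planar_norm_def)
qed

lemma xcoord_over_planar_norm_bounds:
  "planar_norm x > 0 \<Longrightarrow> -1 \<le> xcoord x / planar_norm x \<and> xcoord x / planar_norm x \<le> 1"
proof -
  assume r: "planar_norm x > 0"
  have "\<bar>xcoord x\<bar> \<le> planar_norm x"
    unfolding planar_norm_def by (rule real_le_rsqrt) simp
  then show ?thesis
    using r by (auto simp: abs_le_iff divide_le_eq le_divide_eq)
qed

lemma planar_angle_bounds: "planar_norm x > 0 \<Longrightarrow> planar_angle x \<in> {0..1}"
  using arccos_bounded[of "xcoord x / planar_norm x"] xcoord_over_planar_norm_bounds[of x]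
  by (auto simp: planar_angle_def)

lemma continuous_on_planar_angle: "continuous_on band planar_angle"
proof -
  have "continuous_on band planar_norm"
    unfolding planar_norm_def by (intro continuous_intros)
  moreover have "planar_norm x \<noteq> 0" if "x \<in> band" for x
    using planar_norm_pos[OF that] by simp
  ultimately show ?thesis
    unfolding planar_angle_def
    by (intro continuous_intros) (use xcoord_over_planar_norm_bounds planar_norm_pos in auto)
qed

lemma planar_unit_circle:
  assumes "planar_norm x > 0"
  shows "(xcoord x / planar_norm x)\<^sup>2 + (ycoord x / planar_norm x)\<^sup>2 = 1"
proof -
  have "(xcoord x)\<^sup>2 + (ycoord x)\<^sup>2 = (planar_norm x)\<^sup>2"
    unfolding planar_norm_def by simp
  then show ?thesis
    using assms by (simp add: power_divide flip: add_divide_distrib)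
qed

lemma semicircle_planar_angle:
  assumes r: "planar_norm x > 0" and y: "0 \<le> ycoord x"
  shows "semicircle (planar_angle x) = equator_projection x"
proof -
  have "1 - (xcoord x / planar_norm x)\<^sup>2 = (ycoord x / planar_norm x)\<^sup>2"
    using planar_unit_circle[OF r] by linarith
  then have "sqrt (1 - (xcoord x / planar_norm x)\<^sup>2) = ycoord x / planar_norm x"
    using r y by simp
  then have "sin (pi * planar_angle x) = ycoord x / planar_norm x"
    using xcoord_over_planar_norm_bounds[OF r] by (simp add: planar_angle_def sin_arccos)
  moreover have "cos (pi * planar_angle x) = xcoord x / planar_norm x"
    using xcoord_over_planar_norm_bounds[OF r] by (simp add: planar_angle_def)
  ultimately show ?thesis
    by (simp add: semicircle_def equator_projection_def)
qed

lemma equator_projection_in_S2: "planar_norm x > 0 \<Longrightarrow> equator_projection x \<in> S2"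
  using planar_unit_circle by (simp add: norm_eq_1_R3 equator_projection_def)

lemma sgn_equatorial:
  assumes "planar_norm x > 0"
  shows "sgn (xcoord x, ycoord x, 0) = equator_projection x"
proof -
  have "norm (xcoord x, ycoord x, 0::real) = planar_norm x"
    by (simp add: norm_R3 planar_norm_def)
  then show ?thesis
    using assms by (simp add: sgn_div_norm equator_projection_def divide_inverse_commute scaleR_prod_def)
qed

text \<open>Each stage of a homotopy of paths h from (1,0,0) to (-1,0,0) is spread over the band by the
  planar angle on the half y > 0 and continued to the other half as an odd map.\<close>

definition band_extension :: "(real \<times> real \<Rightarrow> R3) \<Rightarrow> real \<times> R3 \<Rightarrow> R3" where
  "band_extension h z =
     (if ycoord (snd z) \<le> 0 then - h (fst z, planar_angle (- snd z)) else h (fst z, planar_angle (snd z)))"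

locale semicircle_homotopy =
  fixes h :: "real \<times> real \<Rightarrow> R3"
  assumes h_continuous: "continuous_on ({0..1} \<times> {0..1}) h"
    and h_in_S2: "h \<in> {0..1} \<times> {0..1} \<rightarrow> S2"
    and h_path_start: "\<And>t. t \<in> {0..1} \<Longrightarrow> h (t, 0) = (1, 0, 0)"
    and h_path_end: "\<And>t. t \<in> {0..1} \<Longrightarrow> h (t, 1) = (-1, 0, 0)"
begin

lemma band_extension_on_equator:
  assumes x: "x \<in> band" "ycoord x = 0" and t: "t \<in> {0..1}"
  shows "- h (t, planar_angle (- x)) = h (t, planar_angle x)"
proof -
  have "planar_norm x = \<bar>xcoord x\<bar>"
    using x by (simp add: planar_norm_def)
  moreover have "xcoord x \<noteq> 0"
    using planar_norm_pos[OF x(1)] x(2) by (auto simp: planar_norm_def)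
  ultimately consider "planar_angle x = 0" "planar_angle (- x) = 1" | "planar_angle x = 1" "planar_angle (- x) = 0"
    by (cases "xcoord x > 0") (auto simp: planar_angle_def)
  then show ?thesis
    by cases (simp_all add: h_path_start[OF t] h_path_end[OF t])
qed

lemma continuous_on_h_planar_angle:
  assumes f: "continuous_on band f" "f \<in> band \<rightarrow> band" and S: "S \<subseteq> {0..1} \<times> band"
  shows "continuous_on S (\<lambda>z. h (fst z, planar_angle (f (snd z))))"
proof (rule continuous_on_compose2[OF h_continuous])
  have z: "fst z \<in> {0..1}" "f (snd z) \<in> band" if "z \<in> S" for z
    using subsetD[OF S that] funcset_mem[OF f(2)] by (auto simp: mem_Times_iff)
  have "continuous_on S (\<lambda>z. f (snd z))"
    by (rule continuous_on_compose2[OF f(1) continuous_on_snd]) (use S in \<open>auto simp: mem_Times_iff\<close>)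
  then have "continuous_on S (\<lambda>z. planar_angle (f (snd z)))"
    by (rule continuous_on_compose2[OF continuous_on_planar_angle]) (use z in blast)
  then show "continuous_on S (\<lambda>z. (fst z, planar_angle (f (snd z))))"
    by (intro continuous_intros)
  show "(\<lambda>z. (fst z, planar_angle (f (snd z)))) ` S \<subseteq> {0..1} \<times> {0..1}"
    using z planar_angle_bounds planar_norm_pos by blast
qed

lemma continuous_on_band_extension: "continuous_on ({0..1} \<times> band) (band_extension h)"
  unfolding band_extension_def
proof (rule continuous_on_cases_le)
  show "continuous_on {z \<in> {0..1} \<times> band. ycoord (snd z) \<le> 0} (\<lambda>z. - h (fst z, planar_angle (- snd z)))"
    by (intro continuous_on_minus continuous_on_h_planar_angle continuous_intros) auto
  show "continuous_on {z \<in> {0..1} \<times> band. 0 \<le> ycoord (snd z)} (\<lambda>z. h (fst z, planar_angle (snd z)))"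
    using continuous_on_h_planar_angle[of id] by (simp add: continuous_on_id)
  show "continuous_on ({0..1} \<times> band) (\<lambda>z. ycoord (snd z))"
    by (intro continuous_intros)
  show "\<And>z. z \<in> {0..1} \<times> band \<Longrightarrow> ycoord (snd z) = 0 \<Longrightarrow>
      - h (fst z, planar_angle (- snd z)) = h (fst z, planar_angle (snd z))"
    using band_extension_on_equator by (auto simp: mem_Times_iff)
qed

lemma band_extension_uminus:
  assumes "x \<in> band" "t \<in> {0..1}"
  shows "band_extension h (t, - x) = - band_extension h (t, x)"
  using band_extension_on_equator[OF assms(1) _ assms(2)]
  by (cases "ycoord x" "0::real" rule: linorder_cases) (simp_all add: band_extension_def)

lemma band_extension_in_S2: "band_extension h \<in> {0..1} \<times> band \<rightarrow> S2"
proof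
  have angle: "h (t, planar_angle x) \<in> S2" if "t \<in> {0..1}" "x \<in> band" for t x
    using funcset_mem[OF h_in_S2] that planar_angle_bounds planar_norm_pos by blast
  fix z :: "real \<times> R3"
  assume "z \<in> {0..1} \<times> band"
  then have "fst z \<in> {0..1}" "snd z \<in> band" "- snd z \<in> band"
    by auto
  then show "band_extension h z \<in> S2"
    using angle by (simp add: band_extension_def)
qed

lemma band_extension_eq:
  assumes t: "t \<in> {0..1}" and x: "x \<in> band"
    and h_t: "\<And>s. s \<in> {0..1} \<Longrightarrow> h (t, s) = f (semicircle s)"
    and f_odd: "\<And>y. y \<in> S2 \<Longrightarrow> f (- y) = - f y"
  shows "band_extension h (t, x) = f (equator_projection x)"
proof (cases "ycoord x \<le> 0")
  case True
  have r: "planar_norm x > 0"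
    using planar_norm_pos[OF x] .
  have "band_extension h (t, x) = - f (semicircle (planar_angle (- x)))"
    using True h_t planar_angle_bounds[of "- x"] r by (simp add: band_extension_def)
  also have "semicircle (planar_angle (- x)) = - equator_projection x"
    using semicircle_planar_angle[of "- x"] r True by (simp add: equator_projection_uminus)
  finally show ?thesis
    using f_odd[OF equator_projection_in_S2[OF r]] by simp
next
  case False
  have r: "planar_norm x > 0"
    using planar_norm_pos[OF x] .
  then show ?thesis
    using False h_t planar_angle_bounds[of x] semicircle_planar_angle[OF r]
    by (simp add: band_extension_def)
qed

end

definition squash :: "real \<Rightarrow> real" where
  "squash z = max 0 (2 * z - 1) + min 0 (2 * z + 1)"

lemma continuous_on_squash: "continuous_on A squash"
  unfolding squash_def by (intro continuous_intros)

lemma squash_uminus: "squash (- z) = - squash z"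
  by (simp add: squash_def max_def min_def)

lemma squash_eq_0: "\<bar>z\<bar> \<le> 1/2 \<Longrightarrow> squash z = 0"
  by (auto simp: squash_def max_def min_def)

lemma squash_eq_self: "\<bar>z\<bar> = 1 \<Longrightarrow> squash z = z"
  by (auto simp: squash_def max_def min_def abs_if split: if_splits)

definition squash_map :: "real \<Rightarrow> R3 \<Rightarrow> R3" where
  "squash_map t x = sgn (xcoord x, ycoord x, (1 - t) * squash (zcoord x) + t * zcoord x)"

lemma squash_map_nonzero:
  assumes x: "x \<in> S2" and t: "t \<in> {0..1}"
  shows "(xcoord x, ycoord x, (1 - t) * squash (zcoord x) + t * zcoord x) \<noteq> 0"
proof
  assume eq: "(xcoord x, ycoord x, (1 - t) * squash (zcoord x) + t * zcoord x) = 0"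
  then have "\<bar>zcoord x\<bar> = 1"
    using x[unfolded mem_sphere_0] by (simp add: norm_eq_1_R3 zero_prod_def abs_square_eq_1)
  then have "(1 - t) * squash (zcoord x) + t * zcoord x = zcoord x"
    by (simp add: squash_eq_self algebra_simps)
  then show False
    using eq \<open>\<bar>zcoord x\<bar> = 1\<close> by (simp add: zero_prod_def)
qed

lemma squash_map_in_S2: "x \<in> S2 \<Longrightarrow> t \<in> {0..1} \<Longrightarrow> squash_map t x \<in> S2"
  using squash_map_nonzero by (simp add: squash_map_def norm_sgn)

lemma continuous_on_squash_map: "continuous_on ({0..1} \<times> S2) (\<lambda>z. squash_map (fst z) (snd z))"
  unfolding squash_map_def
  by (intro continuous_intros continuous_on_compose2[OF continuous_on_squash])
     (use squash_map_nonzero in auto)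

lemma homotopic_squash_map_id: "homotopic_with_canon (\<lambda>_. True) S2 S2 (squash_map 0) id"
proof (rule homotopic_with_canonI[OF continuous_on_squash_map])
  show "(\<lambda>z. squash_map (fst z) (snd z)) \<in> {0..1} \<times> S2 \<rightarrow> S2"
    using squash_map_in_S2 by auto
qed (simp_all add: squash_map_def sgn_div_norm)

lemma squash_map_uminus: "squash_map 0 (- x) = - squash_map 0 x"
  by (simp add: squash_map_def squash_uminus flip: sgn_minus)

lemma squash_map_on_band: "x \<in> band \<Longrightarrow> squash_map 0 x = equator_projection x"
  by (simp add: squash_map_def band_def squash_eq_0 sgn_equatorial planar_norm_pos)

locale semicircle_straightening = semicircle_homotopy +
  fixes g :: "R3 \<Rightarrow> R3"
  assumes g_continuous: "continuous_on S2 g" and g_in_S2: "g \<in> S2 \<rightarrow> S2"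
    and g_odd: "\<And>x. x \<in> S2 \<Longrightarrow> g (- x) = - g x"
    and h_initial: "\<And>s. s \<in> {0..1} \<Longrightarrow> h (0, s) = g (semicircle s)"
    and h_final: "\<And>s. s \<in> {0..1} \<Longrightarrow> h (1, s) = semicircle s"
begin

text \<open>At time t a point of the band at height z is sent by stage t(1 - 2|z|) of the band extension.
  On the boundary circles this is stage 0, which agrees with g \<circ> squash_map 0 outside the band;
  at time 1 the equator is sent by stage 1, i.e. identically.\<close>

definition deformation :: "real \<times> R3 \<Rightarrow> R3" where
  "deformation z =
     (if \<bar>zcoord (snd z)\<bar> \<le> 1/2 then band_extension h (fst z * (1 - 2 * \<bar>zcoord (snd z)\<bar>), snd z)
      else g (squash_map 0 (snd z)))"

lemma band_extension_initial: "x \<in> band \<Longrightarrow> band_extension h (0, x) = g (equator_projection x)"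
  by (rule band_extension_eq) (auto simp: h_initial g_odd)

lemma band_extension_final: "x \<in> band \<Longrightarrow> band_extension h (1, x) = equator_projection x"
  using band_extension_eq[of 1 x id] by (simp add: h_final)

lemma stage_in_unit_interval: "t \<in> {0..1} \<Longrightarrow> \<bar>z\<bar> \<le> 1/2 \<Longrightarrow> t * (1 - 2 * \<bar>z\<bar>) \<in> {0..1::real}"
  by (auto intro: mult_le_one)

lemma continuous_on_deformation: "continuous_on ({0..1} \<times> S2) deformation"
  unfolding deformation_def
proof (rule continuous_on_cases_le)
  let ?band = "{z \<in> {0..1::real} \<times> S2. \<bar>zcoord (snd z)\<bar> \<le> 1/2}"
  have "continuous_on ?band (\<lambda>z. (fst z * (1 - 2 * \<bar>zcoord (snd z)\<bar>), snd z))"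
    by (intro continuous_intros)
  moreover have "(\<lambda>z. (fst z * (1 - 2 * \<bar>zcoord (snd z)\<bar>), snd z)) ` ?band \<subseteq> {0..1} \<times> band"
    using stage_in_unit_interval by (auto simp: band_def)
  ultimately show "continuous_on ?band (\<lambda>z. band_extension h (fst z * (1 - 2 * \<bar>zcoord (snd z)\<bar>), snd z))"
    using continuous_on_compose2[OF continuous_on_band_extension] by blast
  have "continuous_on {z \<in> {0..1::real} \<times> S2. 1/2 \<le> \<bar>zcoord (snd z)\<bar>} (\<lambda>z. squash_map 0 (snd z))"
    by (rule continuous_on_compose2[OF conjunct1[OF homotopic_with_imp_continuous[OF homotopic_squash_map_id]]
          continuous_on_snd]) auto
  then show "continuous_on {z \<in> {0..1::real} \<times> S2. 1/2 \<le> \<bar>zcoord (snd z)\<bar>} (\<lambda>z. g (squash_map 0 (snd z)))"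
    by (rule continuous_on_compose2[OF g_continuous]) (use squash_map_in_S2 in auto)
  show "continuous_on ({0..1} \<times> S2) (\<lambda>z. \<bar>zcoord (snd z)\<bar>)"
    by (intro continuous_intros)
  fix z :: "real \<times> R3"
  assume "z \<in> {0..1} \<times> S2" "\<bar>zcoord (snd z)\<bar> = 1/2"
  then have "snd z \<in> band" "1 - 2 * \<bar>zcoord (snd z)\<bar> = 0"
    by (auto simp: band_def)
  then show "band_extension h (fst z * (1 - 2 * \<bar>zcoord (snd z)\<bar>), snd z) = g (squash_map 0 (snd z))"
    by (simp add: band_extension_initial squash_map_on_band)
qed

lemma deformation_in_S2: "deformation \<in> {0..1} \<times> S2 \<rightarrow> S2"
proof
  fix z :: "real \<times> R3"
  assume z: "z \<in> {0..1} \<times> S2"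
  show "deformation z \<in> S2"
  proof (cases "\<bar>zcoord (snd z)\<bar> \<le> 1/2")
    case True
    then have "(fst z * (1 - 2 * \<bar>zcoord (snd z)\<bar>), snd z) \<in> {0..1} \<times> band"
      using z stage_in_unit_interval by (auto simp: band_def)
    then show ?thesis
      using True band_extension_in_S2 by (auto simp: deformation_def)
  next
    case False
    then show ?thesis
      using z funcset_mem[OF g_in_S2 squash_map_in_S2] by (auto simp: deformation_def)
  qed
qed

lemma deformation_initial: "x \<in> S2 \<Longrightarrow> deformation (0, x) = g (squash_map 0 x)"
  by (auto simp: deformation_def band_def band_extension_initial squash_map_on_band)

lemma deformation_final_uminus: "x \<in> S2 \<Longrightarrow> deformation (1, - x) = - deformation (1, x)"
proof (cases "\<bar>zcoord x\<bar> \<le> 1/2")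
  case True
  assume "x \<in> S2"
  then show ?thesis
    using True band_extension_uminus[of x "1 - 2 * \<bar>zcoord x\<bar>"] by (auto simp: deformation_def band_def)
next
  case False
  assume "x \<in> S2"
  moreover have "squash_map 0 x \<in> S2"
    by (rule squash_map_in_S2) (use \<open>x \<in> S2\<close> in auto)
  ultimately show ?thesis
    using False g_odd by (simp add: deformation_def squash_map_uminus)
qed

lemma deformation_final_equator: "x \<in> S2 \<Longrightarrow> zcoord x = 0 \<Longrightarrow> deformation (1, x) = x"
proof -
  assume x: "x \<in> S2" "zcoord x = 0"
  then have "planar_norm x = 1"
    by (simp add: planar_norm_def norm_eq_1_R3)
  then have "equator_projection x = x"
    using x(2) by (simp add: equator_projection_def prod_eq_iff)
  then show ?thesis
    using x band_extension_final[of x] by (simp add: deformation_def band_def)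
qed

theorem odd_sphere_degree: "odd (sphere_degree g)"
proof -
  let ?g1 = "\<lambda>x. deformation (1, x)"
  have homotopic_g1: "homotopic_with_canon (\<lambda>_. True) S2 S2 (g \<circ> squash_map 0) ?g1"
    by (rule homotopic_with_canonI[OF continuous_on_deformation deformation_in_S2])
       (simp_all add: deformation_initial)
  moreover have "homotopic_with_canon (\<lambda>_. True) S2 S2 (g \<circ> squash_map 0) (g \<circ> id)"
    by (rule homotopic_with_compose_continuous_left[OF homotopic_squash_map_id g_continuous g_in_S2])
  moreover have "odd (sphere_degree ?g1)"
    using homotopic_with_imp_continuous[OF homotopic_g1] homotopic_with_imp_funspace2[OF homotopic_g1]
    by (intro odd_sphere_degree_if_fixes_equator) (simp_all add: deformation_final_uminus deformation_final_equator)
  ultimately show ?thesis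
    by (metis sphere_degree_homotopic comp_id)
qed

end

lemma odd_sphere_degree_if_fixes_point:
  assumes cont: "continuous_on S2 g" and into: "g \<in> S2 \<rightarrow> S2"
    and odd_map: "\<And>x. x \<in> S2 \<Longrightarrow> g (- x) = - g x"
    and fixed: "g (1, 0, 0) = (1, 0, 0)"
  shows "odd (sphere_degree g)"
proof -
  have semicircle_path: "path semicircle" "path_image semicircle \<subseteq> S2"
    unfolding path_def path_image_def semicircle_def
    by (auto intro!: continuous_intros simp: norm_eq_1_R3)
  have ends: "g (semicircle 0) = (1, 0, 0)" "g (semicircle 1) = (-1, 0, 0)"
    using fixed odd_map[of "(1, 0, 0)"] by (simp_all add: semicircle_def norm_eq_1_R3)
  have "path (g \<circ> semicircle)" "path_image (g \<circ> semicircle) \<subseteq> S2"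
    using semicircle_path cont into
    by (auto simp: path_image_compose intro!: path_continuous_image continuous_on_subset[OF cont])
  moreover have "pathstart (g \<circ> semicircle) = pathstart semicircle"
    "pathfinish (g \<circ> semicircle) = pathfinish semicircle"
    using ends by (simp_all add: pathstart_def pathfinish_def semicircle_def)
  ultimately have "homotopic_paths S2 (g \<circ> semicircle) semicircle"
    using semicircle_path simply_connected_sphere[of "0::R3" 1]
    by (simp add: simply_connected_eq_homotopic_paths)
  then obtain h :: "real \<times> real \<Rightarrow> R3" where h: "continuous_on ({0..1} \<times> {0..1}) h" "h \<in> {0..1} \<times> {0..1} \<rightarrow> S2"
    "\<forall>s\<in>{0..1}. h (0, s) = g (semicircle s)" "\<forall>s\<in>{0..1}. h (1, s) = semicircle s"
    "\<forall>t\<in>{0..1}. pathstart (h \<circ> Pair t) = pathstart (g \<circ> semicircle) \<and>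
       pathfinish (h \<circ> Pair t) = pathfinish (g \<circ> semicircle)"
    unfolding homotopic_paths by auto
  interpret semicircle_straightening h g
    using h cont into odd_map ends by unfold_locales (auto simp: pathstart_def pathfinish_def)
  show ?thesis
    by (rule odd_sphere_degree)
qed

theorem odd_sphere_degree_if_odd:
  assumes cont: "continuous_on S2 g" and into: "g \<in> S2 \<rightarrow> S2"
    and odd_map: "\<And>x. x \<in> S2 \<Longrightarrow> g (- x) = - g x"
  shows "odd (sphere_degree g)"
proof -
  define r where "r = reflection_along (g (1, 0, 0) - (1, 0, 0))"
  have r: "continuous_on S2 r" "r \<in> S2 \<rightarrow> S2"
    by (simp_all add: r_def continuous_on_reflection_along)
  have "odd (sphere_degree (r \<circ> g))"
  proof (rule odd_sphere_degree_if_fixes_point)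
    show "continuous_on S2 (r \<circ> g)"
      using continuous_on_compose[OF cont continuous_on_subset[OF r(1)]] into by blast
    show "r \<circ> g \<in> S2 \<rightarrow> S2"
      using r(2) into by auto
    show "(r \<circ> g) (- x) = - (r \<circ> g) x" if "x \<in> S2" for x
      using odd_map[OF that] by (simp add: r_def reflection_along_uminus)
    have e1: "(1, 0, 0) \<in> S2"
      by (simp add: norm_eq_1_R3)
    then have "norm (g (1, 0, 0)) = norm ((1, 0, 0) :: R3)"
      using funcset_mem[OF into e1] by (simp only: mem_sphere_0)
    then show "(r \<circ> g) (1, 0, 0) = (1, 0, 0)"
      by (simp add: r_def reflection_along_diff)
  qed
  then show ?thesis
    by (simp add: sphere_degree_compose[OF r cont into])
qed

corollary antipodal_homotopy_has_zero:
  fixes F :: "real \<times> R3 \<Rightarrow> R3"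
  assumes cont: "continuous_on ({0..1} \<times> S2) F"
    and odd_map: "\<And>t y. t \<in> {0..1} \<Longrightarrow> y \<in> S2 \<Longrightarrow> F (t, - y) = - F (t, y)"
    and swap: "\<And>y. y \<in> S2 \<Longrightarrow> F (1, y) = - F (0, y)"
  shows "\<exists>t\<in>{0..1}. \<exists>y\<in>S2. F (t, y) = 0"
proof (rule ccontr)
  assume "\<not> ?thesis"
  then have nonzero: "\<And>t y. t \<in> {0..1} \<Longrightarrow> y \<in> S2 \<Longrightarrow> F (t, y) \<noteq> 0"
    by blast
  define g where "g y = sgn (F (0, y))" for y
  have homotopic: "homotopic_with_canon (\<lambda>_. True) S2 S2 g (uminus \<circ> g)"
  proof (rule homotopic_with_canonI[where h = "sgn \<circ> F"])
    show "continuous_on ({0..1} \<times> S2) (sgn \<circ> F)"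
      by (intro continuous_on_compose cont continuous_on_sgn) (use nonzero in auto)
    show "sgn \<circ> F \<in> {0..1} \<times> S2 \<rightarrow> S2"
      using nonzero by (auto simp: norm_sgn)
  qed (simp_all add: g_def swap sgn_minus)
  have g: "continuous_on S2 g" "g \<in> S2 \<rightarrow> S2"
    using homotopic_with_imp_continuous[OF homotopic] homotopic_with_imp_funspace1[OF homotopic] by auto
  have "sphere_degree g = sphere_degree (uminus \<circ> g)"
    by (rule sphere_degree_homotopic[OF homotopic])
  also have "\<dots> = - sphere_degree g"
    using sphere_degree_compose[of uminus g] g by (simp add: sphere_degree_uminus continuous_on_minus)
  finally have "sphere_degree g = 0"
    by simp
  moreover have "odd (sphere_degree g)"
    using g odd_map[of 0] by (intro odd_sphere_degree_if_odd) (simp_all add: g_def sgn_minus)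
  ultimately show False
    by simp
qed

section \<open>Bisection defects of pairs of lines\<close>

definition region_sign :: "oline \<Rightarrow> oline \<Rightarrow> real^2 \<Rightarrow> real" where
  "region_sign L1 L2 x = (if (x \<in> pos_side L1) = (x \<in> pos_side L2) then 1 else -1)"

definition bisection_defect :: "(real^2) measure \<Rightarrow> oline \<Rightarrow> oline \<Rightarrow> real" where
  "bisection_defect M L1 L2 = integral\<^sup>L M (region_sign L1 L2)"

lemma R_plus_pair: "R_plus [L1, L2] = {x. (x \<in> pos_side L1) = (x \<in> pos_side L2)}"
  by (auto simp: R_plus_def lam_def)

lemma R_minus_pair: "R_minus [L1, L2] = - R_plus [L1, L2]"
  by (auto simp: R_plus_def R_minus_def)

lemma region_sign_commute: "region_sign L1 L2 = region_sign L2 L1"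
  by (auto simp: region_sign_def fun_eq_iff)

lemma abs_region_sign: "\<bar>region_sign L1 L2 x\<bar> = 1"
  by (simp add: region_sign_def)

lemma closed_pos_side: "closed (pos_side L)"
  unfolding pos_side_def by (intro closed_Collect_le continuous_intros)

context
  fixes M :: "(real^2) measure"
  assumes M: "mass_distribution M"
begin

lemma space_mass_distribution: "space M = UNIV"
  using M by (simp add: mass_distribution_def)

lemma finite_measure_mass_distribution: "finite_measure M"
  by standard (use M in \<open>auto simp: mass_distribution_def\<close>)

lemma sets_mass_distribution_closed: "closed S \<Longrightarrow> S \<in> sets M"
proof -
  assume "closed S"
  then have "- S \<in> sets M"
    using M by (auto simp: mass_distribution_def open_Compl)
  then have "space M - (- S) \<in> sets M"
    by (rule sets.compl_sets)
  then show ?thesis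
    by (simp add: space_mass_distribution)
qed

lemma null_sets_mass_distribution_line:
  assumes "is_oline L"
  shows "{x. fst L \<bullet> x + snd L = 0} \<in> null_sets M"
proof -
  have S: "{x. fst L \<bullet> x + snd L = 0} \<in> sets M"
    by (intro sets_mass_distribution_closed closed_Collect_eq continuous_intros)
  have "aff_dim {x. fst L \<bullet> x + snd L = 0} < 2"
  proof (cases "fst L = 0")
    case True
    then have "{x. fst L \<bullet> x + snd L = 0} = {}"
      using assms by (auto simp: is_oline_def)
    then show ?thesis
      by simp
  next
    case False
    have "{x. fst L \<bullet> x + snd L = 0} = {x. fst L \<bullet> x = - snd L}"
      by (auto simp: algebra_simps)
    then show ?thesis
      using False by simp
  qed
  then have "emeasure M {x. fst L \<bullet> x + snd L = 0} = 0"
    using M S by (auto simp: mass_distribution_def)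
  then show ?thesis
    using S by (simp add: null_sets_def)
qed

lemma sets_R_plus_pair: "R_plus [L1, L2] \<in> sets M"
proof -
  have "R_plus [L1, L2] = (pos_side L1 \<inter> pos_side L2) \<union> ((space M - pos_side L1) \<inter> (space M - pos_side L2))"
    by (auto simp: R_plus_pair space_mass_distribution)
  also have "\<dots> \<in> sets M"
    using sets_mass_distribution_closed[OF closed_pos_side] by auto
  finally show ?thesis .
qed

lemma sets_R_minus_pair: "R_minus [L1, L2] \<in> sets M"
proof -
  have "R_minus [L1, L2] = space M - R_plus [L1, L2]"
    by (simp add: R_minus_pair space_mass_distribution Compl_eq_Diff_UNIV)
  also have "\<dots> \<in> sets M"
    using sets_R_plus_pair by auto
  finally show ?thesis .
qed

lemma region_sign_eq_indicator:
  "region_sign L1 L2 = (\<lambda>x. indicator (R_plus [L1, L2]) x - indicator (R_minus [L1, L2]) x)"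
  by (auto simp: fun_eq_iff region_sign_def R_plus_pair R_minus_pair indicator_def)

lemma borel_measurable_region_sign: "region_sign L1 L2 \<in> borel_measurable M"
  unfolding region_sign_eq_indicator using sets_R_plus_pair sets_R_minus_pair by measurable

lemma bisection_defect_eq:
  "bisection_defect M L1 L2 = measure M (R_plus [L1, L2]) - measure M (R_minus [L1, L2])"
proof -
  interpret finite_measure M
    by (rule finite_measure_mass_distribution)
  have "integrable M (indicat_real (R_plus [L1, L2]))" "integrable M (indicat_real (R_minus [L1, L2]))"
    using sets_R_plus_pair sets_R_minus_pair by (simp_all add: integrable_indicator_iff less_top[symmetric])
  then show ?thesis
    using sets_R_plus_pair sets_R_minus_pair
    by (simp add: bisection_defect_def region_sign_eq_indicator less_top[symmetric])
qed

lemma bisects_if_bisection_defect_eq_0: "bisection_defect M L1 L2 = 0 \<Longrightarrow> bisects [L1, L2] M"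
proof -
  interpret finite_measure M
    by (rule finite_measure_mass_distribution)
  show "bisection_defect M L1 L2 = 0 \<Longrightarrow> ?thesis"
    by (simp add: bisection_defect_eq bisects_def emeasure_eq_measure)
qed

lemma bisection_defect_uminus_right:
  assumes "is_oline L2"
  shows "bisection_defect M L1 (- L2) = - bisection_defect M L1 L2"
proof -
  have "AE x in M. region_sign L1 (- L2) x = - region_sign L1 L2 x"
  proof (rule AE_I')
    show "{x \<in> space M. region_sign L1 (- L2) x \<noteq> - region_sign L1 L2 x} \<subseteq> {x. fst L2 \<bullet> x + snd L2 = 0}"
      by (auto simp: region_sign_def pos_side_def)
  qed (rule null_sets_mass_distribution_line[OF assms])
  then have "integral\<^sup>L M (region_sign L1 (- L2)) = integral\<^sup>L M (\<lambda>x. - region_sign L1 L2 x)"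
    by (intro integral_cong_AE borel_measurable_region_sign borel_measurable_uminus)
  then show ?thesis
    by (simp add: bisection_defect_def)
qed

lemma bisection_defect_uminus_left:
  "is_oline L1 \<Longrightarrow> bisection_defect M (- L1) L2 = - bisection_defect M L1 L2"
  using bisection_defect_uminus_right by (simp add: bisection_defect_def region_sign_commute[of _ L2])

end

lemma eventually_pos_side_iff:
  assumes "(Ls \<longlongrightarrow> L) sequentially" "fst L \<bullet> x + snd L \<noteq> 0"
  shows "eventually (\<lambda>n. (x \<in> pos_side (Ls n)) = (x \<in> pos_side L)) sequentially"
proof -
  have lim: "((\<lambda>n. fst (Ls n) \<bullet> x + snd (Ls n)) \<longlongrightarrow> fst L \<bullet> x + snd L) sequentially"
    by (intro tendsto_intros assms(1))
  show ?thesis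
  proof (cases "fst L \<bullet> x + snd L > 0")
    case True
    then have "eventually (\<lambda>n. fst (Ls n) \<bullet> x + snd (Ls n) > 0) sequentially"
      using order_tendstoD(1)[OF lim] by blast
    then show ?thesis
      by eventually_elim (use True in \<open>auto simp: pos_side_def\<close>)
  next
    case False
    then have neg: "fst L \<bullet> x + snd L < 0"
      using assms(2) by simp
    then have "eventually (\<lambda>n. fst (Ls n) \<bullet> x + snd (Ls n) < 0) sequentially"
      using order_tendstoD(2)[OF lim] by blast
    then show ?thesis
      by eventually_elim (use neg in \<open>auto simp: pos_side_def\<close>)
  qed
qed

lemma region_sign_tendsto:
  assumes "(L1s \<longlongrightarrow> L1) sequentially" "(L2s \<longlongrightarrow> L2) sequentially"
    and "fst L1 \<bullet> x + snd L1 \<noteq> 0" "fst L2 \<bullet> x + snd L2 \<noteq> 0"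
  shows "(\<lambda>n. region_sign (L1s n) (L2s n) x) \<longlonglongrightarrow> region_sign L1 L2 x"
proof (rule tendsto_eventually)
  show "eventually (\<lambda>n. region_sign (L1s n) (L2s n) x = region_sign L1 L2 x) sequentially"
    using eventually_pos_side_iff[OF assms(1,3)] eventually_pos_side_iff[OF assms(2,4)]
    by eventually_elim (simp add: region_sign_def)
qed

lemma continuous_on_bisection_defect:
  fixes A B :: "'a::metric_space \<Rightarrow> oline"
  assumes M: "mass_distribution M"
    and A: "continuous_on T A" and B: "continuous_on T B"
    and lines: "\<And>z. z \<in> T \<Longrightarrow> is_oline (A z) \<and> is_oline (B z)"
  shows "continuous_on T (\<lambda>z. bisection_defect M (A z) (B z))"
proof (rule continuous_on_sequentiallyI)
  interpret finite_measure M
    by (rule finite_measure_mass_distribution[OF M])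
  fix u a
  assume u: "\<forall>n. u n \<in> T" and a: "a \<in> T" and lim: "u \<longlonglongrightarrow> a"
  have "eventually (\<lambda>n. u n \<in> T) sequentially"
    using u by simp
  then have lim_A: "(\<lambda>n. A (u n)) \<longlonglongrightarrow> A a" and lim_B: "(\<lambda>n. B (u n)) \<longlonglongrightarrow> B a"
    using continuous_on_tendsto_compose[OF A lim a] continuous_on_tendsto_compose[OF B lim a] by auto
  let ?N = "{x. fst (A a) \<bullet> x + snd (A a) = 0} \<union> {x. fst (B a) \<bullet> x + snd (B a) = 0}"
  have convergence: "AE x in M. (\<lambda>n. region_sign (A (u n)) (B (u n)) x) \<longlonglongrightarrow> region_sign (A a) (B a) x"
  proof (rule AE_I')
    show "?N \<in> null_sets M"
      using null_sets_mass_distribution_line[OF M] lines[OF a] by auto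
    show "{x \<in> space M. \<not> (\<lambda>n. region_sign (A (u n)) (B (u n)) x) \<longlonglongrightarrow> region_sign (A a) (B a) x} \<subseteq> ?N"
      using region_sign_tendsto[OF lim_A lim_B] by blast
  qed
  show "(\<lambda>n. bisection_defect M (A (u n)) (B (u n))) \<longlonglongrightarrow> bisection_defect M (A a) (B a)"
    unfolding bisection_defect_def
    by (rule integral_dominated_convergence[where w = "\<lambda>_. 1", OF _ _ _ convergence])
       (simp_all add: borel_measurable_region_sign[OF M] abs_region_sign)
qed

definition line_of :: "R3 \<Rightarrow> oline" where
  "line_of y = (xcoord y *\<^sub>R vector [1, 0] + ycoord y *\<^sub>R vector [0, 1], zcoord y)"

lemma is_oline_line_of: "y \<noteq> 0 \<Longrightarrow> is_oline (line_of y)"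
proof (rule ccontr)
  assume "y \<noteq> 0" "\<not> is_oline (line_of y)"
  then have v: "xcoord y *\<^sub>R (vector [1, 0] :: real^2) + ycoord y *\<^sub>R vector [0, 1] = 0" "zcoord y = 0"
    by (auto simp: is_oline_def line_of_def)
  have "xcoord y = 0" "ycoord y = 0"
    using arg_cong[OF v(1), of "\<lambda>v. v $ 1"] arg_cong[OF v(1), of "\<lambda>v. v $ 2"] by simp_all
  then show False
    using \<open>y \<noteq> 0\<close> v(2) by (simp add: prod_eq_iff)
qed

lemma line_of_uminus: "line_of (- y) = - line_of y"
  by (simp add: line_of_def algebra_simps)

lemma continuous_on_line_of: "continuous_on S line_of"
  unfolding line_of_def by (intro continuous_intros)

lemma exists_bisecting_pair:
  fixes A :: "real \<Rightarrow> oline"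
  assumes M: "mass_distribution \<mu>1" "mass_distribution \<mu>2" "mass_distribution \<mu>3"
    and A: "continuous_on {0..1} A" "\<And>t. t \<in> {0..1} \<Longrightarrow> is_oline (A t)" and A_flip: "A 1 = - A 0"
  shows "\<exists>t\<in>{0..1}. \<exists>L. is_oline L \<and> bisects [A t, L] \<mu>1 \<and> bisects [A t, L] \<mu>2 \<and> bisects [A t, L] \<mu>3"
proof -
  define D where "D M z = bisection_defect M (A (fst z)) (line_of (snd z))" for M and z :: "real \<times> R3"
  define F where "F z = (D \<mu>1 z, D \<mu>2 z, D \<mu>3 z)" for z
  have line_of_S2: "is_oline (line_of y)" if "y \<in> S2" for y
    using that by (intro is_oline_line_of) auto
  have lines: "is_oline (A (fst z)) \<and> is_oline (line_of (snd z))" if "z \<in> {0..1} \<times> S2" for z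
    using that A(2) line_of_S2 by (auto simp: mem_Times_iff)
  have "continuous_on ({0..1} \<times> S2) (D M)" if "mass_distribution M" for M
    unfolding D_def
    by (intro continuous_on_bisection_defect[OF that] continuous_on_compose2[OF A(1)]
        continuous_on_compose2[OF continuous_on_line_of] continuous_intros lines) auto
  then have "continuous_on ({0..1} \<times> S2) F"
    unfolding F_def using M by (intro continuous_on_Pair) auto
  moreover have "F (t, - y) = - F (t, y)" if "y \<in> S2" for t y
    using M line_of_S2[OF that] by (simp add: F_def D_def line_of_uminus bisection_defect_uminus_right)
  moreover have "F (1, y) = - F (0, y)" for y
    using M A(2)[of 0] by (simp add: F_def D_def A_flip bisection_defect_uminus_left)
  ultimately obtain t y where t: "t \<in> {0..1}" and y: "y \<in> S2" and zero: "F (t, y) = 0"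
    using antipodal_homotopy_has_zero[of F] by blast
  have "bisects [A t, line_of y] \<mu>1" "bisects [A t, line_of y] \<mu>2" "bisects [A t, line_of y] \<mu>3"
    using zero by (simp_all add: F_def D_def zero_prod_def bisects_if_bisection_defect_eq_0 M)
  then show ?thesis
    using t line_of_S2[OF y] by blast
qed

theorem theorem3:
  fixes \<mu>1 \<mu>2 \<mu>3 :: "(real^2) measure" and l :: oline
  assumes "mass_distribution \<mu>1" and "mass_distribution \<mu>2" and "mass_distribution \<mu>3"
    and "is_proper_line l"
  shows "\<exists>l1 l2. is_oline l1 \<and> is_oline l2 \<and> parallel l1 l \<and>
           bisects [l1, l2] \<mu>1 \<and> bisects [l1, l2] \<mu>2 \<and> bisects [l1, l2] \<mu>3"
proof -
  define A where "A t = (sin (pi * t) *\<^sub>R fst l, cos (pi * t))" for t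
  have "\<not> (sin (pi * t) = 0 \<and> cos (pi * t) = 0)" for t
    by (metis sin_cos_squared_add power_zero_numeral add_0 zero_neq_one)
  then have "is_oline (A t)" for t
    using assms(4) by (auto simp: A_def is_oline_def is_proper_line_def)
  moreover have "continuous_on {0..1} A"
    unfolding A_def by (intro continuous_intros)
  moreover have "A 1 = - A 0"
    by (simp add: A_def)
  ultimately obtain t l2 where "is_oline l2" "bisects [A t, l2] \<mu>1" "bisects [A t, l2] \<mu>2" "bisects [A t, l2] \<mu>3"
    using exists_bisecting_pair[OF assms(1-3)] by blast
  moreover have "parallel (A t) l"
    by (auto simp: parallel_def A_def)
  ultimately show ?thesis
    using \<open>\<And>t. is_oline (A t)\<close> by blast
qed

end
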